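(* Let $\mathbf{x}$ be a probability vector for $S$ and define $W_{\rm for}=\inf\{W\in\mathbb{R}:\ \mathbf{g}\otimes(0,1)\succ_g\mathbf{x}\otimes(1,0)\text{ with respect to }H_{SW}(W)\}$. Then the infimum is attained and $$W_{\rm for}=kT\log\Big(Z_S\max_i x_ie^{\beta E_i}\Big)=kT\log\max_i\frac{x_i}{g_i}.$$
   Context: $S$ has Hamiltonian $H_S=\sum_{i=1}^nE_i|i\rangle\langle i|$, $\beta=1/(kT)>0$, $Z_S=\sum_ie^{-\beta E_i}$, Gibbs vector $g_i=e^{-\beta E_i}/Z_S$. The battery is a two-level system with Hamiltonian $W|1\rangle\langle1|$ and $H_{SW}(W)=H_S\otimes\mathbb{I}+\mathbb{I}\otimes W|1\rangle\langle1|$; $\mathbf{x}\otimes(1,0)$ denotes the product distribution with battery in $|0\rangle$, and $\mathbf{g}\otimes(0,1)$ with battery in $|1\rangle$. Thermo-majorisation for a Hamiltonian $H$ with eigenvalues $\epsilon_1,\dots,\epsilon_m$ and $Z=\sum_je^{-\beta\epsilon_j}$: for a probability vector $\mathbf{u}$ let $\pi$ order $u_{\pi(1)}e^{\beta\epsilon_{\pi(1)}}\ge\dots\ge u_{\pi(m)}e^{\beta\epsilon_{\pi(m)}}$; the curve $T(\mathbf{u})$ is the piecewise linear function on $[0,Z]$ joining the origin and $\big(\sum_{j\le k}e^{-\beta\epsilon_{\pi(j)}},\sum_{j\le k}u_{\pi(j)}\big)$, $k=1,\dots,m$; $\mathbf{u}\succ_g\mathbf{v}$ iff $T(\mathbf{u})\ge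 T(\mathbf{v})$ pointwise. *)

theory Defs
  imports "HOL-Analysis.Analysis"
begin

text \<open>Hamiltonians with m levels are given by energy functions eps on indices 0..m-1,
  probability vectors by functions u on 0..m-1.\<close>

definition prob_vec :: "nat \<Rightarrow> (nat \<Rightarrow> real) \<Rightarrow> bool" where
  "prob_vec m u \<longleftrightarrow> (\<forall>i<m. 0 \<le> u i) \<and> (\<Sum>i<m. u i) = 1"

definition part_fun :: "real \<Rightarrow> nat \<Rightarrow> (nat \<Rightarrow> real) \<Rightarrow> real" where
  "part_fun \<beta> m eps = (\<Sum>j<m. exp (- \<beta> * eps j))"

text \<open>pi orders u_(pi 1) e^(beta eps_(pi 1)) >= ... >= u_(pi m) e^(beta eps_(pi m))
  (0-indexed here).\<close>
definition tm_order :: "real \<Rightarrow> nat \<Rightarrow> (nat \<Rightarrow> real) \<Rightarrow> (nat \<Rightarrow> real) \<Rightarrow> (nat \<Rightarrow> nat) \<Rightarrow> bool" where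
  "tm_order \<beta> m eps u \<pi> \<longleftrightarrow> \<pi> permutes {..<m} \<and>
     (\<forall>j k. j \<le> k \<and> k < m \<longrightarrow>
        u (\<pi> k) * exp (\<beta> * eps (\<pi> k)) \<le> u (\<pi> j) * exp (\<beta> * eps (\<pi> j)))"

text \<open>Elbow points of the curve: (X k, Y k), k = 0..m, with (X 0, Y 0) the origin.\<close>
definition tm_X :: "real \<Rightarrow> (nat \<Rightarrow> real) \<Rightarrow> (nat \<Rightarrow> nat) \<Rightarrow> nat \<Rightarrow> real" where
  "tm_X \<beta> eps \<pi> k = (\<Sum>j<k. exp (- \<beta> * eps (\<pi> j)))"

definition tm_Y :: "(nat \<Rightarrow> real) \<Rightarrow> (nat \<Rightarrow> nat) \<Rightarrow> nat \<Rightarrow> real" where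
  "tm_Y u \<pi> k = (\<Sum>j<k. u (\<pi> j))"

definition tm_seg :: "real \<Rightarrow> (nat \<Rightarrow> real) \<Rightarrow> (nat \<Rightarrow> real) \<Rightarrow> (nat \<Rightarrow> nat) \<Rightarrow> nat \<Rightarrow> real \<Rightarrow> real" where
  "tm_seg \<beta> eps u \<pi> k x =
     tm_Y u \<pi> k + (x - tm_X \<beta> eps \<pi> k) / (tm_X \<beta> eps \<pi> (Suc k) - tm_X \<beta> eps \<pi> k)
                     * (tm_Y u \<pi> (Suc k) - tm_Y u \<pi> k)"

text \<open>Thermo-majorisation u \<succ>_g v w.r.t. the Hamiltonian with energies eps (m levels):
  the piecewise linear curve T(u) lies pointwise (on [0,Z]) above T(v).  At every x,
  T(u)(x) is the value of the segment of T(u) whose x-range contains x.  The curve does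
  not depend on the choice of ordering permutation among ties, so we quantify over all
  admissible orderings.\<close>
definition thermo_maj :: "real \<Rightarrow> nat \<Rightarrow> (nat \<Rightarrow> real) \<Rightarrow> (nat \<Rightarrow> real) \<Rightarrow> (nat \<Rightarrow> real) \<Rightarrow> bool" where
  "thermo_maj \<beta> m eps u v \<longleftrightarrow>
     (\<forall>\<pi> \<sigma> x k l. tm_order \<beta> m eps u \<pi> \<and> tm_order \<beta> m eps v \<sigma> \<and>
        0 \<le> x \<and> x \<le> part_fun \<beta> m eps \<and>
        k < m \<and> tm_X \<beta> eps \<pi> k \<le> x \<and> x \<le> tm_X \<beta> eps \<pi> (Suc k) \<and>
        l < m \<and> tm_X \<beta> eps \<sigma> l \<le> x \<and> x \<le> tm_X \<beta> eps \<sigma> (Suc l) \<longrightarrow>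
        tm_seg \<beta> eps v \<sigma> l x \<le> tm_seg \<beta> eps u \<pi> k x)"

text \<open>Joint system S+battery, 2n levels: index i < n is |i>|0>, index n+i is |i>|1>.\<close>
definition H_SW :: "nat \<Rightarrow> (nat \<Rightarrow> real) \<Rightarrow> real \<Rightarrow> nat \<Rightarrow> real" where
  "H_SW n E W j = (if j < n then E j else E (j - n) + W)"

definition tensor_bat0 :: "nat \<Rightarrow> (nat \<Rightarrow> real) \<Rightarrow> nat \<Rightarrow> real" where
  "tensor_bat0 n x j = (if j < n then x j else 0)"

definition tensor_bat1 :: "nat \<Rightarrow> (nat \<Rightarrow> real) \<Rightarrow> nat \<Rightarrow> real" where
  "tensor_bat1 n x j = (if j < n then 0 else x (j - n))"

definition gibbs :: "real \<Rightarrow> nat \<Rightarrow> (nat \<Rightarrow> real) \<Rightarrow> nat \<Rightarrow> real" where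
  "gibbs \<beta> n E i = exp (- \<beta> * E i) / part_fun \<beta> n E"

end

theory Submission
  imports Defs "HOL-Combinatorics.List_Permutation"
begin

text \<open>The curve of a probability vector \<open>u\<close> starts with its largest slope
  \<open>max\<^sub>j u\<^sub>j e\<^sup>\<beta>\<^sup>\<epsilon>\<^sup>j\<close>, and if all slopes are at most \<open>S\<close> it lies below
  \<open>min (S x) 1\<close>. With the battery raised to level \<open>W\<close>, every occupied level of
  \<open>g \<otimes> (0,1)\<close> has the same slope \<open>e\<^sup>\<beta>\<^sup>W / Z\<^sub>S\<close>, so its curve is exactly
  \<open>min (e\<^sup>\<beta>\<^sup>W x / Z\<^sub>S) 1\<close>. Hence \<open>g \<otimes> (0,1)\<close> thermo-majorises \<open>x \<otimes> (1,0)\<close>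
  iff \<open>max\<^sub>i x\<^sub>i e\<^sup>\<beta>\<^sup>E\<^sup>i \<le> e\<^sup>\<beta>\<^sup>W / Z\<^sub>S\<close>, and the admissible \<open>W\<close> form the closed
  half-line starting at \<open>kT log (Z\<^sub>S max\<^sub>i x\<^sub>i e\<^sup>\<beta>\<^sup>E\<^sup>i)\<close>.\<close>

lemma tm_order_exists: "\<exists>\<pi>. tm_order \<beta> m eps u \<pi>"
proof -
  define f where "f j = - (u j * exp (\<beta> * eps j))" for j
  define xs where "xs = sort_key f [0..<m]"
  have ms: "mset xs = mset [0..<m]" by (simp add: xs_def)
  obtain p where p: "bij_betw p {..<length xs} {..<length [0..<m]}"
      "\<forall>i<length xs. xs ! i = [0..<m] ! p i"
    using permutation_Ex_bij[OF ms] by blast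
  have len: "length xs = m" by (simp add: xs_def)
  have pb: "bij_betw p {..<m} {..<m}" using p(1) len by simp
  have xi: "xs ! i = p i" if "i < m" for i
  proof -
    have "p i < m" using pb that by (auto dest: bij_betwE)
    then show ?thesis using p(2) len that by simp
  qed
  define \<pi> where "\<pi> i = (if i < m then p i else i)" for i
  have "bij_betw \<pi> {..<m} {..<m}"
    using pb by (rule bij_betw_cong[THEN iffD1, rotated]) (simp add: \<pi>_def)
  then have perm: "\<pi> permutes {..<m}"
    by (rule bij_imp_permutes) (simp add: \<pi>_def)
  have srt: "sorted (map f xs)" by (simp add: xs_def)
  have "u (\<pi> k) * exp (\<beta> * eps (\<pi> k)) \<le> u (\<pi> j) * exp (\<beta> * eps (\<pi> j))"
    if "j \<le> k" "k < m" for j k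
  proof -
    have "f (xs ! j) \<le> f (xs ! k)"
      using sorted_nth_mono[OF srt that(1)] that len by simp
    then show ?thesis using that xi by (simp add: f_def \<pi>_def)
  qed
  then show ?thesis using perm unfolding tm_order_def by blast
qed

lemma tm_order_permutes: "tm_order \<beta> m eps u \<pi> \<Longrightarrow> \<pi> permutes {..<m}"
  by (simp add: tm_order_def)

lemma tm_order_first_max:
  assumes ord: "tm_order \<beta> m eps u \<pi>" and j: "j < m"
  shows "u j * exp (\<beta> * eps j) \<le> u (\<pi> 0) * exp (\<beta> * eps (\<pi> 0))"
proof -
  obtain k where k: "k < m" "j = \<pi> k"
    using j permutes_image[OF tm_order_permutes[OF ord]] by (metis imageE lessThan_iff)
  then show ?thesis using ord unfolding tm_order_def by blast
qed

lemma tm_order_dominant_block: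
  assumes ord: "tm_order \<beta> m eps u \<pi>" and A: "A \<subseteq> {..<m}"
    and dom: "\<And>i j. i < m \<Longrightarrow> i \<notin> A \<Longrightarrow> j \<in> A \<Longrightarrow>
                u i * exp (\<beta> * eps i) < u j * exp (\<beta> * eps j)"
    and k: "k < card A"
  shows "\<pi> k \<in> A"
proof (rule ccontr)
  assume notA: "\<pi> k \<notin> A"
  have perm: "\<pi> permutes {..<m}" using tm_order_permutes[OF ord] .
  define P where "P = {p. p < m \<and> \<pi> p \<in> A}"
  have "\<pi> ` P = A"
    using A permutes_image[OF perm] by (auto simp: P_def)
  then have cardP: "card P = card A"
    using card_image[OF inj_on_subset[OF permutes_inj[OF perm]]] by (metis subset_UNIV)
  have "\<not> P \<subseteq> {..<card A}"
  proof
    assume "P \<subseteq> {..<card A}"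
    then have "P = {..<card A}" using cardP by (intro card_subset_eq) auto
    then show False using k notA by (auto simp: P_def)
  qed
  then obtain p where p: "p < m" "\<pi> p \<in> A" "card A \<le> p"
    by (auto simp: P_def subset_iff not_less)
  then have "u (\<pi> p) * exp (\<beta> * eps (\<pi> p)) \<le> u (\<pi> k) * exp (\<beta> * eps (\<pi> k))"
    using ord k unfolding tm_order_def by auto
  moreover have "\<pi> k < m" using k p permutes_in_image[OF perm] by simp
  ultimately show False using dom[OF _ notA p(2)] by fastforce
qed

lemma tm_X_Suc: "tm_X \<beta> eps \<pi> (Suc k) = tm_X \<beta> eps \<pi> k + exp (- \<beta> * eps (\<pi> k))"
  by (simp add: tm_X_def)

lemma tm_Y_Suc: "tm_Y u \<pi> (Suc k) = tm_Y u \<pi> k + u (\<pi> k)"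
  by (simp add: tm_Y_def)

lemma tm_X_mono: "k \<le> k' \<Longrightarrow> tm_X \<beta> eps \<pi> k \<le> tm_X \<beta> eps \<pi> k'"
  unfolding tm_X_def by (intro sum_mono2) auto

lemma tm_Y_mono:
  assumes "\<pi> permutes {..<m}" "prob_vec m u" "k \<le> k'" "k' \<le> m"
  shows "tm_Y u \<pi> k \<le> tm_Y u \<pi> k'"
  unfolding tm_Y_def
proof (rule sum_mono2)
  show "0 \<le> u (\<pi> j)" if "j \<in> {..<k'} - {..<k}" for j
    using assms that permutes_in_image[OF assms(1)] by (auto simp: prob_vec_def)
qed (use assms in auto)

lemma tm_Y_le_1:
  assumes perm: "\<pi> permutes {..<m}" and u: "prob_vec m u" and k: "k \<le> m"
  shows "tm_Y u \<pi> k \<le> 1"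
proof -
  have "tm_Y u \<pi> k \<le> tm_Y u \<pi> m" using tm_Y_mono[OF perm u k] by simp
  also have "\<dots> = sum u (\<pi> ` {..<m})"
    unfolding tm_Y_def by (simp add: sum.reindex[OF inj_on_subset[OF permutes_inj[OF perm]]])
  also have "\<dots> = 1" using u by (simp add: permutes_image[OF perm] prob_vec_def)
  finally show ?thesis .
qed

lemma tm_seg_eq:
  "tm_seg \<beta> eps u \<pi> k y
     = tm_Y u \<pi> k + (y - tm_X \<beta> eps \<pi> k) / exp (- \<beta> * eps (\<pi> k)) * u (\<pi> k)"
  by (simp add: tm_seg_def tm_X_Suc tm_Y_Suc)

lemma tm_seg_first: "tm_seg \<beta> eps u \<pi> 0 y = u (\<pi> 0) * exp (\<beta> * eps (\<pi> 0)) * y"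
  by (simp add: tm_seg_eq tm_X_def tm_Y_def exp_minus field_simps)

lemma tm_seg_le_slope_bound:
  assumes perm: "\<pi> permutes {..<m}" and u: "prob_vec m u"
    and S: "\<And>j. j < m \<Longrightarrow> u j * exp (\<beta> * eps j) \<le> S" and k: "k < m"
    and y: "tm_X \<beta> eps \<pi> k \<le> y"
  shows "tm_seg \<beta> eps u \<pi> k y \<le> S * y"
proof -
  have bound: "u (\<pi> j) \<le> S * exp (- \<beta> * eps (\<pi> j))" if "j < m" for j
  proof -
    have "u (\<pi> j) * exp (\<beta> * eps (\<pi> j)) \<le> S"
      using S permutes_in_image[OF perm] that by simp
    then show ?thesis by (simp add: exp_minus field_simps)
  qed
  define D where "D = exp (- \<beta> * eps (\<pi> k))"
  have D: "0 < D" by (simp add: D_def)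
  have "tm_Y u \<pi> k \<le> S * tm_X \<beta> eps \<pi> k"
    unfolding tm_Y_def tm_X_def sum_distrib_left using k bound by (intro sum_mono) auto
  moreover have "(y - tm_X \<beta> eps \<pi> k) / D * u (\<pi> k) \<le> (y - tm_X \<beta> eps \<pi> k) / D * (S * D)"
    using bound[OF k] y D by (intro mult_left_mono) (auto simp: D_def)
  ultimately have "tm_seg \<beta> eps u \<pi> k y \<le> S * tm_X \<beta> eps \<pi> k + (y - tm_X \<beta> eps \<pi> k) / D * (S * D)"
    by (simp add: tm_seg_eq D_def)
  also have "\<dots> = S * y" using D by (simp add: field_simps)
  finally show ?thesis .
qed

lemma tm_seg_le_1:
  assumes perm: "\<pi> permutes {..<m}" and u: "prob_vec m u" and k: "k < m"
    and y: "y \<le> tm_X \<beta> eps \<pi> (Suc k)"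
  shows "tm_seg \<beta> eps u \<pi> k y \<le> 1"
proof -
  define D where "D = exp (- \<beta> * eps (\<pi> k))"
  have "(y - tm_X \<beta> eps \<pi> k) / D \<le> 1" using y by (simp add: tm_X_Suc D_def)
  moreover have "0 \<le> u (\<pi> k)"
    using u k permutes_in_image[OF perm] by (simp add: prob_vec_def)
  ultimately have "tm_seg \<beta> eps u \<pi> k y \<le> tm_Y u \<pi> k + 1 * u (\<pi> k)"
    unfolding tm_seg_eq D_def[symmetric] by (intro add_left_mono mult_right_mono)
  also have "\<dots> \<le> 1" using tm_Y_le_1[OF perm u, of "Suc k"] k by (simp add: tm_Y_Suc)
  finally show ?thesis .
qed

text \<open>Compare the two curves on the shorter of their two initial segments.\<close>
lemma thermo_maj_slope_le:
  assumes maj: "thermo_maj \<beta> m eps u v"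
    and S: "\<And>i. i < m \<Longrightarrow> u i * exp (\<beta> * eps i) \<le> S" and j: "j < m"
  shows "v j * exp (\<beta> * eps j) \<le> S"
proof -
  obtain \<pi> \<sigma> where \<pi>: "tm_order \<beta> m eps u \<pi>" and \<sigma>: "tm_order \<beta> m eps v \<sigma>"
    using tm_order_exists by metis
  have m: "0 < m" using j by simp
  have \<pi>0: "\<pi> 0 < m"
    using m permutes_in_image[OF tm_order_permutes[OF \<pi>]] by simp
  define y where "y = min (exp (- \<beta> * eps (\<pi> 0))) (exp (- \<beta> * eps (\<sigma> 0)))"
  have y: "0 < y" by (simp add: y_def)
  have "y \<le> part_fun \<beta> m eps"
    unfolding part_fun_def y_def using \<pi>0
    by (intro min.coboundedI1 member_le_sum[where f = "\<lambda>j. exp (- \<beta> * eps j)"]) auto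
  then have "tm_seg \<beta> eps v \<sigma> 0 y \<le> tm_seg \<beta> eps u \<pi> 0 y"
    using maj \<pi> \<sigma> m y unfolding thermo_maj_def by (auto simp: tm_X_def y_def)
  then have "v (\<sigma> 0) * exp (\<beta> * eps (\<sigma> 0)) \<le> u (\<pi> 0) * exp (\<beta> * eps (\<pi> 0))"
    using y by (simp add: tm_seg_first)
  then show ?thesis using tm_order_first_max[OF \<sigma> j] S[OF \<pi>0] by linarith
qed

lemma thermo_maj_if_curve_ge_min:
  assumes curve: "\<And>\<pi> k y. tm_order \<beta> m eps u \<pi> \<Longrightarrow> k < m \<Longrightarrow>
        tm_X \<beta> eps \<pi> k \<le> y \<Longrightarrow> y \<le> tm_X \<beta> eps \<pi> (Suc k) \<Longrightarrow>
        min (S * y) 1 \<le> tm_seg \<beta> eps u \<pi> k y"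
    and v: "prob_vec m v" and S: "\<And>j. j < m \<Longrightarrow> v j * exp (\<beta> * eps j) \<le> S"
  shows "thermo_maj \<beta> m eps u v"
  unfolding thermo_maj_def
proof (intro allI impI, elim conjE)
  fix \<pi> \<sigma> y k l
  assume \<pi>: "tm_order \<beta> m eps u \<pi>" and \<sigma>: "tm_order \<beta> m eps v \<sigma>"
    and k: "k < m" "tm_X \<beta> eps \<pi> k \<le> y" "y \<le> tm_X \<beta> eps \<pi> (Suc k)"
    and l: "l < m" "tm_X \<beta> eps \<sigma> l \<le> y" "y \<le> tm_X \<beta> eps \<sigma> (Suc l)"
  have "tm_seg \<beta> eps v \<sigma> l y \<le> min (S * y) 1"
    using tm_seg_le_slope_bound[OF tm_order_permutes[OF \<sigma>] v S l(1,2)]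
      tm_seg_le_1[OF tm_order_permutes[OF \<sigma>] v l(1,3)] by simp
  also have "\<dots> \<le> tm_seg \<beta> eps u \<pi> k y" using curve[OF \<pi> k] .
  finally show "tm_seg \<beta> eps v \<sigma> l y \<le> tm_seg \<beta> eps u \<pi> k y" .
qed

lemma sum_upper_half: "sum f {n..<2 * n :: nat} = (\<Sum>j<n. f (j + n))"
  using sum.shift_bounds_nat_ivl[of f 0 n n] by (simp add: lessThan_atLeast0 mult_2)

lemma sum_lessThan_double: "(\<Sum>j<2 * n :: nat. f j) = (\<Sum>j<n. f j) + (\<Sum>j<n. f (j + n))"
proof -
  have "(\<Sum>j<2 * n. f j) = sum f {0..<n} + sum f {n..<2 * n}"
    by (simp add: lessThan_atLeast0 sum.atLeastLessThan_concat)
  then show ?thesis by (simp add: sum_upper_half lessThan_atLeast0)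
qed

lemma part_fun_pos: "0 < n \<Longrightarrow> 0 < part_fun \<beta> n E"
  unfolding part_fun_def by (intro sum_pos) auto

lemma prob_vec_gibbs: "0 < n \<Longrightarrow> prob_vec n (gibbs \<beta> n E)"
  using part_fun_pos[of n \<beta> E]
  by (simp add: prob_vec_def gibbs_def part_fun_def flip: sum_divide_distrib)

lemma prob_vec_tensor_bat0: "prob_vec n x \<Longrightarrow> prob_vec (2 * n) (tensor_bat0 n x)"
  by (simp add: prob_vec_def sum_lessThan_double tensor_bat0_def)

lemma prob_vec_tensor_bat1: "prob_vec n x \<Longrightarrow> prob_vec (2 * n) (tensor_bat1 n x)"
  by (simp add: prob_vec_def sum_lessThan_double tensor_bat1_def)

lemma prob_vec_Max_slope_pos:
  assumes x: "prob_vec n x"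
  shows "0 < (MAX i\<in>{..<n}. x i * exp (\<beta> * E i))"
proof -
  obtain i where i: "i < n" "0 < x i"
  proof (rule ccontr)
    assume "\<not> thesis"
    then have "\<forall>i<n. x i = 0" using that x by (force simp: prob_vec_def)
    then show False using x by (simp add: prob_vec_def)
  qed
  then have "x i * exp (\<beta> * E i) \<le> (MAX i\<in>{..<n}. x i * exp (\<beta> * E i))" by simp
  with i show ?thesis by (smt (verit) exp_gt_zero mult_pos_pos)
qed

lemma gibbs_battery_value:
  "n \<le> j \<Longrightarrow> tensor_bat1 n (gibbs \<beta> n E) j
     = exp (\<beta> * W) / part_fun \<beta> n E * exp (- \<beta> * H_SW n E W j)"
  by (simp add: tensor_bat1_def gibbs_def H_SW_def field_simps flip: exp_add)

lemma gibbs_battery_slope: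
  "tensor_bat1 n (gibbs \<beta> n E) j * exp (\<beta> * H_SW n E W j)
     = (if j < n then 0 else exp (\<beta> * W) / part_fun \<beta> n E)"
proof (cases "j < n")
  case False
  then show ?thesis
    using gibbs_battery_value[of n j \<beta> E W] by (simp add: mult.assoc flip: exp_add)
qed (simp add: tensor_bat1_def)

lemma gibbs_battery_order_upper:
  assumes n: "0 < n"
    and ord: "tm_order \<beta> (2 * n) (H_SW n E W) (tensor_bat1 n (gibbs \<beta> n E)) \<pi>"
    and k: "k < n"
  shows "n \<le> \<pi> k"
proof -
  have "\<pi> k \<in> {n..<2 * n}"
  proof (rule tm_order_dominant_block[OF ord])
    show "k < card {n..<2 * n}" using k by simp
    fix i j assume "i < 2 * n" "i \<notin> {n..<2 * n}" "j \<in> {n..<2 * n}"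
    then show "tensor_bat1 n (gibbs \<beta> n E) i * exp (\<beta> * H_SW n E W i)
             < tensor_bat1 n (gibbs \<beta> n E) j * exp (\<beta> * H_SW n E W j)"
      using part_fun_pos[OF n, of \<beta> E] by (simp add: gibbs_battery_slope)
  qed auto
  then show ?thesis by simp
qed

lemma gibbs_battery_tm_Y:
  assumes "0 < n" "tm_order \<beta> (2 * n) (H_SW n E W) (tensor_bat1 n (gibbs \<beta> n E)) \<pi>" "k \<le> n"
  shows "tm_Y (tensor_bat1 n (gibbs \<beta> n E)) \<pi> k
           = exp (\<beta> * W) / part_fun \<beta> n E * tm_X \<beta> (H_SW n E W) \<pi> k"
  unfolding tm_Y_def tm_X_def sum_distrib_left
proof (intro sum.cong refl)
  fix j assume "j \<in> {..<k}"
  then have "n \<le> \<pi> j" using gibbs_battery_order_upper[OF assms(1,2)] assms(3) by simp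
  then show "tensor_bat1 n (gibbs \<beta> n E) (\<pi> j)
      = exp (\<beta> * W) / part_fun \<beta> n E * exp (- \<beta> * H_SW n E W (\<pi> j))"
    by (rule gibbs_battery_value)
qed

lemma gibbs_battery_tm_Y_n:
  assumes n: "0 < n"
    and ord: "tm_order \<beta> (2 * n) (H_SW n E W) (tensor_bat1 n (gibbs \<beta> n E)) \<pi>"
  shows "tm_Y (tensor_bat1 n (gibbs \<beta> n E)) \<pi> n = 1"
proof -
  have inj: "inj_on \<pi> {..<n}"
    using inj_on_subset[OF permutes_inj[OF tm_order_permutes[OF ord]] subset_UNIV] .
  have "\<pi> ` {..<n} \<subseteq> {n..<2 * n}"
    using gibbs_battery_order_upper[OF n ord] permutes_in_image[OF tm_order_permutes[OF ord]]
    by auto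
  then have img: "\<pi> ` {..<n} = {n..<2 * n}"
    using card_image[OF inj] by (intro card_subset_eq) auto
  have "tm_Y (tensor_bat1 n (gibbs \<beta> n E)) \<pi> n = sum (tensor_bat1 n (gibbs \<beta> n E)) {n..<2 * n}"
    unfolding tm_Y_def img[symmetric] by (simp add: sum.reindex[OF inj])
  also have "\<dots> = 1"
    using prob_vec_gibbs[OF n] by (simp add: sum_upper_half tensor_bat1_def prob_vec_def)
  finally show ?thesis .
qed

lemma gibbs_battery_curve:
  assumes n: "0 < n"
    and ord: "tm_order \<beta> (2 * n) (H_SW n E W) (tensor_bat1 n (gibbs \<beta> n E)) \<pi>"
    and k: "k < 2 * n" "tm_X \<beta> (H_SW n E W) \<pi> k \<le> y" "y \<le> tm_X \<beta> (H_SW n E W) \<pi> (Suc k)"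
  shows "tm_seg \<beta> (H_SW n E W) (tensor_bat1 n (gibbs \<beta> n E)) \<pi> k y
           = min (exp (\<beta> * W) / part_fun \<beta> n E * y) 1"
proof -
  let ?c = "exp (\<beta> * W) / part_fun \<beta> n E" and ?u = "tensor_bat1 n (gibbs \<beta> n E)"
    and ?X = "tm_X \<beta> (H_SW n E W) \<pi>"
  have c: "0 < ?c" using part_fun_pos[OF n] by simp
  have Xn: "?c * ?X n = 1"
    using gibbs_battery_tm_Y[OF n ord order.refl] gibbs_battery_tm_Y_n[OF n ord] by linarith
  show ?thesis
  proof (cases "k < n")
    case True
    have "?c * y \<le> ?c * ?X n"
      using k(3) tm_X_mono[of "Suc k" n \<beta> "H_SW n E W" \<pi>] True c by (intro mult_left_mono) auto
    then have le: "?c * y \<le> 1" using Xn by linarith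
    have seg: "tm_seg \<beta> (H_SW n E W) ?u \<pi> k y = ?c * y"
    proof -
      define D where "D = exp (- \<beta> * H_SW n E W (\<pi> k))"
      have "tm_seg \<beta> (H_SW n E W) ?u \<pi> k y = ?c * ?X k + (y - ?X k) / D * (?c * D)"
        using gibbs_battery_tm_Y[OF n ord, of k] True
          gibbs_battery_value[OF gibbs_battery_order_upper[OF n ord True], of \<beta> E W]
        by (simp add: tm_seg_eq D_def)
      also have "\<dots> = ?c * y"
        using part_fun_pos[OF n, of \<beta> E] by (simp add: D_def field_simps)
      finally show ?thesis .
    qed
    show ?thesis by (simp only: seg min_absorb1[OF le])
  next
    case False
    have perm: "\<pi> permutes {..<2 * n}" using tm_order_permutes[OF ord] .
    have u: "prob_vec (2 * n) ?u" using prob_vec_tensor_bat1[OF prob_vec_gibbs[OF n]] .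
    have "tm_Y ?u \<pi> k' = 1" if "n \<le> k'" "k' \<le> 2 * n" for k'
      using tm_Y_le_1[OF perm u that(2)] tm_Y_mono[OF perm u that] gibbs_battery_tm_Y_n[OF n ord]
      by simp
    then have seg: "tm_seg \<beta> (H_SW n E W) ?u \<pi> k y = 1"
      using False k(1) by (simp add: tm_seg_def)
    have "?c * ?X n \<le> ?c * y"
      using k(2) tm_X_mono[of n k \<beta> "H_SW n E W" \<pi>] False c by (intro mult_left_mono) auto
    then have ge: "1 \<le> ?c * y" using Xn by linarith
    show ?thesis by (simp only: seg min_absorb2[OF ge])
  qed
qed

lemma thermo_maj_gibbs_battery_iff:
  assumes n: "0 < n" and x: "prob_vec n x"
  shows "thermo_maj \<beta> (2 * n) (H_SW n E W) (tensor_bat1 n (gibbs \<beta> n E)) (tensor_bat0 n x)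
     \<longleftrightarrow> (\<forall>i<n. x i * exp (\<beta> * E i) \<le> exp (\<beta> * W) / part_fun \<beta> n E)"
proof
  have "0 < exp (\<beta> * W) / part_fun \<beta> n E" using part_fun_pos[OF n] by simp
  then have slope: "tensor_bat1 n (gibbs \<beta> n E) j * exp (\<beta> * H_SW n E W j)
                      \<le> exp (\<beta> * W) / part_fun \<beta> n E" for j
    by (simp add: gibbs_battery_slope)
  assume maj: "thermo_maj \<beta> (2 * n) (H_SW n E W) (tensor_bat1 n (gibbs \<beta> n E)) (tensor_bat0 n x)"
  show "\<forall>i<n. x i * exp (\<beta> * E i) \<le> exp (\<beta> * W) / part_fun \<beta> n E"
  proof (intro allI impI)
    fix i assume "i < n"
    then show "x i * exp (\<beta> * E i) \<le> exp (\<beta> * W) / part_fun \<beta> n E"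
      using thermo_maj_slope_le[OF maj slope, of i] by (simp add: tensor_bat0_def H_SW_def)
  qed
next
  assume "\<forall>i<n. x i * exp (\<beta> * E i) \<le> exp (\<beta> * W) / part_fun \<beta> n E"
  then have "tensor_bat0 n x j * exp (\<beta> * H_SW n E W j) \<le> exp (\<beta> * W) / part_fun \<beta> n E"
    for j
    using part_fun_pos[OF n, of \<beta> E] by (simp add: tensor_bat0_def H_SW_def less_imp_le)
  then show "thermo_maj \<beta> (2 * n) (H_SW n E W) (tensor_bat1 n (gibbs \<beta> n E)) (tensor_bat0 n x)"
    using gibbs_battery_curve[OF n] prob_vec_tensor_bat0[OF x]
    by (intro thermo_maj_if_curve_ge_min) auto
qed

lemma le_exp_div_iff_ln_le:
  fixes \<beta> Z M W :: real
  assumes "0 < \<beta>" "0 < Z" "0 < M"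
  shows "M \<le> exp (\<beta> * W) / Z \<longleftrightarrow> 1 / \<beta> * ln (Z * M) \<le> W"
proof -
  have "M \<le> exp (\<beta> * W) / Z \<longleftrightarrow> exp (ln (Z * M)) \<le> exp (\<beta> * W)"
    using assms by (simp add: pos_le_divide_eq mult.commute)
  also have "\<dots> \<longleftrightarrow> 1 / \<beta> * ln (Z * M) \<le> W"
    using assms(1) by (simp add: pos_divide_le_eq mult.commute)
  finally show ?thesis .
qed

lemma Max_div_gibbs:
  assumes n: "0 < n"
  shows "(MAX i\<in>{..<n}. x i / gibbs \<beta> n E i)
           = part_fun \<beta> n E * (MAX i\<in>{..<n}. x i * exp (\<beta> * E i))"
proof -
  have mono: "mono (\<lambda>v. part_fun \<beta> n E * v)"
    using part_fun_pos[OF n] by (auto intro: monoI mult_left_mono)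
  have img: "(\<lambda>i. x i / gibbs \<beta> n E i) ` {..<n}
               = (\<lambda>v. part_fun \<beta> n E * v) ` (\<lambda>i. x i * exp (\<beta> * E i)) ` {..<n}"
    unfolding image_image by (intro image_cong refl) (simp add: gibbs_def exp_minus field_simps)
  have "part_fun \<beta> n E * (MAX i\<in>{..<n}. x i * exp (\<beta> * E i))
          = Max ((\<lambda>v. part_fun \<beta> n E * v) ` (\<lambda>i. x i * exp (\<beta> * E i)) ` {..<n})"
    using mono n by (intro mono_Max_commute) auto
  then show ?thesis by (simp only: img)
qed

theorem mainTheorem9:
  fixes \<beta> :: real and n :: nat and E x :: "nat \<Rightarrow> real"
  assumes "\<beta> > 0"
    and "prob_vec n x"
  defines "Wset \<equiv> {W :: real. thermo_maj \<beta> (2 * n) (H_SW n E W)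
                      (tensor_bat1 n (gibbs \<beta> n E)) (tensor_bat0 n x)}"
  shows "Inf Wset \<in> Wset \<and> (\<forall>W\<in>Wset. Inf Wset \<le> W)
       \<and> Inf Wset = (1 / \<beta>) * ln (part_fun \<beta> n E * (MAX i\<in>{..<n}. x i * exp (\<beta> * E i)))
       \<and> Inf Wset = (1 / \<beta>) * ln (MAX i\<in>{..<n}. x i / gibbs \<beta> n E i)"
proof -
  have n: "0 < n" using assms(2) by (cases n) (auto simp: prob_vec_def)
  define M where "M = (MAX i\<in>{..<n}. x i * exp (\<beta> * E i))"
  define W0 where "W0 = 1 / \<beta> * ln (part_fun \<beta> n E * M)"
  have "W \<in> Wset \<longleftrightarrow> W0 \<le> W" for W
  proof -
    have "W \<in> Wset \<longleftrightarrow> (\<forall>i<n. x i * exp (\<beta> * E i) \<le> exp (\<beta> * W) / part_fun \<beta> n E)"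
      unfolding Wset_def using thermo_maj_gibbs_battery_iff[OF n assms(2)] by simp
    also have "\<dots> \<longleftrightarrow> M \<le> exp (\<beta> * W) / part_fun \<beta> n E"
      using n unfolding M_def by (subst Max_le_iff) auto
    also have "\<dots> \<longleftrightarrow> W0 \<le> W"
      using le_exp_div_iff_ln_le[OF assms(1) part_fun_pos[OF n] prob_vec_Max_slope_pos[OF assms(2)]]
      by (simp add: M_def W0_def)
    finally show ?thesis .
  qed
  then have "Wset = {W0..}" by auto
  then show ?thesis using Max_div_gibbs[OF n] by (simp add: W0_def M_def)
qed

end
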